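(* Let $d=1$ and $V:\mathbb{R}\to\mathbb{R}$ Borel. The following are equivalent: (a) $V\in\mathcal K_1$; (b) $V\in\widehat{\mathcal K}_1$; (c) $\sup_{x\in\mathbb{R}}\int_{|z-x|\le1}|V(z)|\,dz<\infty$; (d) $\lim_{T\to0^+}\|S(V)\|_{T,\infty}=0$; (e) $\|S(V)\|_{T,\infty}<\infty$ for some (equivalently, every) $T>0$.
   Context: $g(t,x,y)=(4\pi t)^{-d/2}e^{-|y-x|^2/(4t)}$. $S(V,t,x,y)=\int_0^t\int_{\mathbb{R}^d}\frac{g(s,x,z)g(t-s,z,y)}{g(t,x,y)}|V(z)|\,dz\,ds$, $\|S(V)\|_{T,\infty}=\sup_{0<t\le T}\sup_{x,y}S(V,t,x,y)$. $V\in\mathcal K_d$ (Kato class) means $\lim_{t\to0^+}\sup_{x}\int_0^t\int_{\mathbb{R}^d}g(s,x,z)|V(z)|\,dz\,ds=0$; $V\in\widehat{\mathcal K}_d$ (enlarged Kato class) means $\sup_x\int_0^t\int_{\mathbb{R}^d}g(s,x,z)|V(z)|\,dz\,ds<\infty$ for some (equivalently every) $t>0$. *)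

theory Defs
  imports "HOL-Analysis.Analysis"
begin

definition gauss :: "real \<Rightarrow> real \<Rightarrow> real \<Rightarrow> real" where
  "gauss t x y = (4 * pi * t) powr (-1/2) * exp (- ((y - x)^2) / (4 * t))"

definition kato_int :: "(real \<Rightarrow> real) \<Rightarrow> real \<Rightarrow> real \<Rightarrow> ennreal" where
  "kato_int V t x =
     (\<integral>\<^sup>+ s. (\<integral>\<^sup>+ z. ennreal (gauss s x z * \<bar>V z\<bar>) \<partial>lborel) * indicator {0<..<t} s \<partial>lborel)"

definition kato_class :: "(real \<Rightarrow> real) \<Rightarrow> bool" where
  "kato_class V \<longleftrightarrow> ((\<lambda>t. SUP x. kato_int V t x) \<longlongrightarrow> 0) (at_right 0)"

definition kato_hat_class :: "(real \<Rightarrow> real) \<Rightarrow> bool" where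
  "kato_hat_class V \<longleftrightarrow> (\<exists>t>0. (SUP x. kato_int V t x) < \<infinity>)"

definition S_fun :: "(real \<Rightarrow> real) \<Rightarrow> real \<Rightarrow> real \<Rightarrow> real \<Rightarrow> ennreal" where
  "S_fun V t x y =
     (\<integral>\<^sup>+ s. (\<integral>\<^sup>+ z. ennreal (gauss s x z * gauss (t - s) z y / gauss t x y * \<bar>V z\<bar>) \<partial>lborel)
        * indicator {0<..<t} s \<partial>lborel)"

definition S_norm :: "(real \<Rightarrow> real) \<Rightarrow> real \<Rightarrow> ennreal" where
  "S_norm V T = (SUP t\<in>{0<..T}. SUP x. SUP y. S_fun V t x y)"

end

theory Submission imports Defs "HOL-Probability.Distributions" begin

text \<open>
  Everything is controlled by the uniform local mass M = sup_x of the integral of |V| over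
  [x-1,x+1]. By the Chapman-Kolmogorov bridge identity the integrand of S(V,t,x,y) at time s is
  a Gaussian of variance s(t-s)/t centred on the segment from x to y, so both S(V) and the
  Kato integral are of the form "time integral of a Gaussian average of |V|". A Gaussian average
  of variance \<sigma> is at most a constant times (1 + \<sigma>^(-1/2)) M, and the singularities
  s^(-1/2), (t-s)^(-1/2) are integrable, which gives the upper bound C (t + sqrt t) M, tending to 0.
  Conversely, on a time window where the variance stays comparable to t, the Gaussian is bounded
  below on [x-1,x+1], so each of the quantities dominates c_t times the local mass at x.
\<close>

lemma powr_minus_half: "0 \<le> (x::real) \<Longrightarrow> x powr (-(1/2)) = 1 / sqrt x"
  by (cases "x = 0") (simp_all add: powr_minus_divide powr_half_sqrt)

lemma gauss_eq: "0 < t \<Longrightarrow> gauss t x y = exp (- ((y - x)^2) / (4 * t)) / sqrt (4 * pi * t)"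
  unfolding gauss_def by (simp add: powr_minus_half)

lemma gauss_bridge:
  assumes "0 < s" "s < t"
  shows "gauss s x z * gauss (t - s) z y / gauss t x y = gauss (s * (t - s) / t) (x + s / t * (y - x)) z"
proof -
  have t: "0 < t" "0 < t - s" "0 < s * (t - s) / t" using assms by auto
  have exponent: "- ((z - x)^2) / (4 * s) + - ((y - z)^2) / (4 * (t - s)) - (- ((y - x)^2) / (4 * t))
      = - ((z - (x + s / t * (y - x)))^2) / (4 * (s * (t - s) / t))"
    using t assms by (simp add: field_simps power2_eq_square)
  have "sqrt (4 * pi * (s * (t - s) / t)) = sqrt (4 * pi * s) * sqrt (4 * pi * (t - s)) / sqrt (4 * pi * t)"
    using t by (simp flip: real_sqrt_mult real_sqrt_divide add: field_simps)
  then have normalisation: "sqrt (4 * pi * t) / (sqrt (4 * pi * s) * sqrt (4 * pi * (t - s)))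
      = 1 / sqrt (4 * pi * (s * (t - s) / t))"
    by simp
  have "gauss s x z * gauss (t - s) z y / gauss t x y
      = exp (- ((z - x)^2) / (4 * s)) * exp (- ((y - z)^2) / (4 * (t - s))) / exp (- ((y - x)^2) / (4 * t))
        * (sqrt (4 * pi * t) / (sqrt (4 * pi * s) * sqrt (4 * pi * (t - s))))"
    using t assms by (simp add: gauss_eq)
  also have "\<dots> = gauss (s * (t - s) / t) (x + s / t * (y - x)) z"
    unfolding exp_add[symmetric] exp_diff[symmetric] exponent normalisation
    using t by (simp add: gauss_eq)
  finally show ?thesis .
qed

definition local_mass :: "(real \<Rightarrow> real) \<Rightarrow> real \<Rightarrow> ennreal" where
  "local_mass V x = (\<integral>\<^sup>+ z. ennreal \<bar>V z\<bar> * indicator {x - 1..x + 1} z \<partial>lborel)"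

definition sup_local_mass :: "(real \<Rightarrow> real) \<Rightarrow> ennreal" where
  "sup_local_mass V = (SUP x. local_mass V x)"

lemma local_mass_le_sup: "local_mass V x \<le> sup_local_mass V"
  unfolding sup_local_mass_def by (rule SUP_upper) simp

lemma sup_local_mass_finite:
  assumes "0 < C" and "\<And>x. ennreal C * local_mass V x \<le> B" and "B < \<infinity>"
  shows "sup_local_mass V < \<infinity>"
proof -
  have "ennreal C * sup_local_mass V = (SUP x. ennreal C * local_mass V x)"
    unfolding sup_local_mass_def by (rule SUP_mult_left_ennreal)
  also have "\<dots> \<le> B" using assms(2) by (rule SUP_least)
  finally have "ennreal C * sup_local_mass V < \<infinity>" using assms(3) by (rule le_less_trans)
  then show ?thesis using assms(1) by (auto simp: ennreal_mult_less_top)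
qed

subsection \<open>Upper bounds\<close>

lemma nn_integral_exp_square:
  assumes "0 < a"
  shows "(\<integral>\<^sup>+ w. ennreal (exp (- ((w - m)^2) / (8 * a))) \<partial>lborel) = ennreal (sqrt (8 * pi * a))"
proof -
  have density: "exp (- ((w - m)^2) / (8 * a)) = sqrt (8 * pi * a) * normal_density m (2 * sqrt a) w" for w
    using assms by (simp add: normal_density_def real_sqrt_mult power_mult_distrib)
  have "(\<integral>\<^sup>+ w. ennreal (exp (- ((w - m)^2) / (8 * a))) \<partial>lborel)
      = ennreal (sqrt (8 * pi * a)) * (\<integral>\<^sup>+ w. ennreal (normal_density m (2 * sqrt a) w) \<partial>lborel)"
    unfolding density using assms by (simp add: ennreal_mult nn_integral_cmult)
  also have "(\<integral>\<^sup>+ w. ennreal (normal_density m (2 * sqrt a) w) \<partial>lborel) = 1"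
    using nn_integral_eq_integral[OF integrable_normal_density[of "2 * sqrt a" m]]
      integral_normal_density[of "2 * sqrt a" m] assms by simp
  finally show ?thesis by simp
qed

lemma exp_square_le_shifted:
  fixes a m w z :: real
  assumes "1 \<le> a" "\<bar>w - z\<bar> \<le> 1"
  shows "exp (- ((z - m)^2) / (4 * a)) \<le> exp (1/4) * exp (- ((w - m)^2) / (8 * a))"
proof -
  have "(w - m)^2 \<le> 2 * (z - m)^2 + 2 * (w - z)^2"
    using zero_le_power2[of "(w - z) - (z - m)"] by (simp add: power2_eq_square algebra_simps)
  moreover have "(w - z)^2 \<le> 1" using assms(2) by (simp add: abs_square_le_1)
  ultimately have "- ((z - m)^2) / (4 * a) \<le> 1/4 + - ((w - m)^2) / (8 * a)"
    using assms(1) by (simp add: field_simps)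
  then show ?thesis by (simp flip: exp_add)
qed

lemma exp_square_le_spread:
  fixes a c m z :: real
  assumes a: "1 \<le> a" and c: "0 \<le> c"
  shows "ennreal (exp (- ((z - m)^2) / (4 * a)) * c)
    \<le> (\<integral>\<^sup>+ w. ennreal (exp (1/4) / 2 * exp (- ((w - m)^2) / (8 * a))) * (ennreal c * indicator {w - 1..w + 1} z) \<partial>lborel)"
proof -
  let ?e = "exp (- ((z - m)^2) / (4 * a)) * c"
  let ?G = "\<lambda>w. exp (1/4) / 2 * exp (- ((w - m)^2) / (8 * a))"
  have "ennreal ?e = ennreal (?e / 2) * ennreal 2"
    using c by (subst ennreal_mult[symmetric]) auto
  also have "\<dots> = (\<integral>\<^sup>+ w. ennreal (?e / 2) * indicator {z - 1..z + 1} w \<partial>lborel)"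
    by (simp add: nn_integral_cmult_indicator)
  also have "\<dots> \<le> (\<integral>\<^sup>+ w. ennreal (?G w) * (ennreal c * indicator {w - 1..w + 1} z) \<partial>lborel)"
  proof (rule nn_integral_mono)
    fix w
    show "ennreal (?e / 2) * indicator {z - 1..z + 1} w \<le> ennreal (?G w) * (ennreal c * indicator {w - 1..w + 1} z)"
    proof (cases "\<bar>w - z\<bar> \<le> 1")
      case True
      have "?e / 2 \<le> ?G w * c"
        using mult_right_mono[OF exp_square_le_shifted[OF a True, of m] c] by simp
      moreover have "ennreal (?G w) * (ennreal c * indicator {w - 1..w + 1} z) = ennreal (?G w * c)"
        using True by (subst ennreal_mult') (auto simp: abs_le_iff)
      moreover have "indicator {z - 1..z + 1} w = (1::ennreal)"
        using True by (auto simp: abs_le_iff)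
      ultimately show ?thesis by (simp add: ennreal_leI)
    qed (auto simp: indicator_def)
  qed
  finally show ?thesis .
qed

text \<open>
  Spreading the mass at z uniformly over w \<in> [z-1,z+1], Tonelli turns the Gaussian average
  into an integral over w of a wider Gaussian times local masses.
\<close>
lemma nn_integral_exp_square_weight_le:
  assumes [measurable]: "V \<in> borel_measurable borel" and a: "1 \<le> a"
  shows "(\<integral>\<^sup>+ z. ennreal (exp (- ((z - m)^2) / (4 * a)) * \<bar>V z\<bar>) \<partial>lborel)
         \<le> ennreal (exp (1/4) * sqrt (2 * pi * a)) * sup_local_mass V"
proof -
  define G where "G w = exp (1/4) / 2 * exp (- ((w - m)^2) / (8 * a))" for w
  have "(\<integral>\<^sup>+ z. ennreal (exp (- ((z - m)^2) / (4 * a)) * \<bar>V z\<bar>) \<partial>lborel)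
      \<le> (\<integral>\<^sup>+ z. \<integral>\<^sup>+ w. ennreal (G w) * (ennreal \<bar>V z\<bar> * indicator {w - 1..w + 1} z) \<partial>lborel \<partial>lborel)"
    unfolding G_def using a by (intro nn_integral_mono exp_square_le_spread) auto
  also have "\<dots> = (\<integral>\<^sup>+ w. \<integral>\<^sup>+ z. ennreal (G w) * (ennreal \<bar>V z\<bar> * indicator {w - 1..w + 1} z) \<partial>lborel \<partial>lborel)"
    by (rule lborel_pair.Fubini'[symmetric]) (unfold G_def indicator_def atLeastAtMost_iff, measurable)
  also have "\<dots> = (\<integral>\<^sup>+ w. ennreal (G w) * local_mass V w \<partial>lborel)"
    unfolding local_mass_def by (intro nn_integral_cong nn_integral_cmult) measurable
  also have "\<dots> \<le> (\<integral>\<^sup>+ w. ennreal (G w) \<partial>lborel) * sup_local_mass V"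
    by (subst nn_integral_multc[symmetric]) (auto simp: G_def intro!: nn_integral_mono mult_left_mono local_mass_le_sup)
  also have "(\<integral>\<^sup>+ w. ennreal (G w) \<partial>lborel)
      = (\<integral>\<^sup>+ w. ennreal (exp (1/4) / 2) * ennreal (exp (- ((w - m)^2) / (8 * a))) \<partial>lborel)"
    unfolding G_def by (intro nn_integral_cong ennreal_mult') simp
  also have "\<dots> = ennreal (exp (1/4) / 2) * ennreal (sqrt (8 * pi * a))"
    using a nn_integral_exp_square[of a m] by (simp add: nn_integral_cmult)
  also have "\<dots> = ennreal (exp (1/4) * sqrt (2 * pi * a))"
    using real_sqrt_mult[of 4 "2 * pi * a"] a by (simp add: mult.assoc flip: ennreal_mult)
  finally show ?thesis .
qed

lemma gauss_le_exp_square: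
  assumes "0 < \<sigma>" "\<sigma> \<le> a"
  shows "gauss \<sigma> m z \<le> exp (- ((z - m)^2) / (4 * a)) / sqrt (4 * pi * \<sigma>)"
proof -
  have "(z - m)^2 / (4 * a) \<le> (z - m)^2 / (4 * \<sigma>)"
    using assms by (intro divide_left_mono) auto
  then show ?thesis using assms by (simp add: gauss_eq divide_right_mono)
qed

lemma sqrt_max_one_div_le:
  assumes "0 < \<sigma>"
  shows "sqrt (max \<sigma> 1 / (2 * \<sigma>)) \<le> 1 + 1 / sqrt (2 * \<sigma>)"
proof (cases "1 \<le> \<sigma>")
  case True
  then have "sqrt (max \<sigma> 1 / (2 * \<sigma>)) = sqrt (1/2)" using assms by simp
  moreover have "sqrt (1/2) \<le> (1::real)" by simp
  ultimately show ?thesis using assms by (smt (verit) divide_nonneg_nonneg real_sqrt_ge_zero)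
qed (simp add: real_sqrt_divide)

lemma nn_integral_gauss_weight_le:
  assumes V: "V \<in> borel_measurable borel" and \<sigma>: "0 < \<sigma>"
  shows "(\<integral>\<^sup>+ z. ennreal (gauss \<sigma> m z * \<bar>V z\<bar>) \<partial>lborel)
         \<le> ennreal (exp (1/4) * (1 + 1 / sqrt (2 * \<sigma>))) * sup_local_mass V"
proof -
  define a where "a = max \<sigma> 1"
  have a: "1 \<le> a" "\<sigma> \<le> a" by (auto simp: a_def)
  have "ennreal (gauss \<sigma> m z * \<bar>V z\<bar>)
      \<le> ennreal (1 / sqrt (4 * pi * \<sigma>)) * ennreal (exp (- ((z - m)^2) / (4 * a)) * \<bar>V z\<bar>)" for z
    using mult_right_mono[OF gauss_le_exp_square[OF \<sigma> a(2), of m z] abs_ge_zero[of "V z"]] \<sigma>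
    by (subst ennreal_mult'[symmetric]) (auto intro!: ennreal_leI)
  then have "(\<integral>\<^sup>+ z. ennreal (gauss \<sigma> m z * \<bar>V z\<bar>) \<partial>lborel)
      \<le> ennreal (1 / sqrt (4 * pi * \<sigma>)) * (\<integral>\<^sup>+ z. ennreal (exp (- ((z - m)^2) / (4 * a)) * \<bar>V z\<bar>) \<partial>lborel)"
    using V by (subst nn_integral_cmult[symmetric]) (auto intro: nn_integral_mono)
  also have "\<dots> \<le> ennreal (1 / sqrt (4 * pi * \<sigma>)) * (ennreal (exp (1/4) * sqrt (2 * pi * a)) * sup_local_mass V)"
    by (intro mult_left_mono nn_integral_exp_square_weight_le[OF V a(1)]) auto
  also have "\<dots> = ennreal (exp (1/4) * sqrt (a / (2 * \<sigma>))) * sup_local_mass V"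
  proof -
    have "sqrt (a / (2 * \<sigma>)) = sqrt (2 * pi * a) / sqrt (4 * pi * \<sigma>)"
      using \<sigma> by (simp flip: real_sqrt_divide add: field_simps)
    then show ?thesis using \<sigma> a by (simp add: mult_ac flip: ennreal_mult)
  qed
  also have "\<dots> \<le> ennreal (exp (1/4) * (1 + 1 / sqrt (2 * \<sigma>))) * sup_local_mass V"
    using sqrt_max_one_div_le[OF \<sigma>] unfolding a_def by (intro mult_right_mono ennreal_leI) auto
  finally show ?thesis .
qed

lemma inverse_sqrt_bridge_variance_le:
  assumes s: "0 < s" "s < t"
  shows "1 / sqrt (2 * (s * (t - s) / t)) \<le> 1 / sqrt s + 1 / sqrt (t - s)"
proof (cases "s \<le> t - s")
  case True
  then have "s \<le> 2 * (s * (t - s) / t)" using s by (simp add: field_simps)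
  then have "1 / sqrt (2 * (s * (t - s) / t)) \<le> 1 / sqrt s"
    using s by (intro divide_left_mono mult_pos_pos) auto
  then show ?thesis using s by (smt (verit) divide_nonneg_nonneg real_sqrt_ge_zero)
next
  case False
  then have "(t - s) * (t - 2 * s) \<le> 0" using s by (intro mult_nonneg_nonpos) auto
  then have "t - s \<le> 2 * (s * (t - s) / t)" using s by (simp add: field_simps algebra_simps)
  then have "1 / sqrt (2 * (s * (t - s) / t)) \<le> 1 / sqrt (t - s)"
    using s by (intro divide_left_mono mult_pos_pos) auto
  then show ?thesis using s by (smt (verit) divide_nonneg_nonneg real_sqrt_ge_zero)
qed

text \<open>At s = 0 both sides of the rewriting vanish, since 0 powr r = 0 and 1 / 0 = 0.\<close>
lemma has_integral_time_weight:
  assumes "0 \<le> t"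
  shows "((\<lambda>s. 1 + 1 / sqrt s + 1 / sqrt (t - s)) has_integral t + 4 * sqrt t) {0..t}"
proof -
  have left: "((\<lambda>s. s powr (-(1/2))) has_integral 2 * sqrt t) {0..t}"
    using has_integral_powr_from_0[of "-(1/2)" t] assms by (simp add: powr_half_sqrt mult.commute)
  have "((\<lambda>x. (-x) powr (-(1/2))) has_integral 2 * sqrt t) {-t..0}"
    using left by (subst (asm) has_integral_reflect_real[symmetric]) simp
  from has_integral_shift_real_ivl[OF this, of "-t"]
  have right: "((\<lambda>s. (t - s) powr (-(1/2))) has_integral 2 * sqrt t) {0..t}" by simp
  have "((\<lambda>s. 1 + s powr (-(1/2)) + (t - s) powr (-(1/2))) has_integral t + 2 * sqrt t + 2 * sqrt t) {0..t}"
    using has_integral_const_real[of "1::real" 0 t] assms by (intro has_integral_add left right) auto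
  then show ?thesis
    by (rule has_integral_eq_rhs[OF has_integral_cong[THEN iffD1], rotated]) (auto simp: powr_minus_half)
qed

lemma nn_integral_time_le:
  fixes F :: "real \<Rightarrow> ennreal"
  assumes t: "0 < t" and c: "0 \<le> c"
    and F: "\<And>s. 0 < s \<Longrightarrow> s < t \<Longrightarrow> F s \<le> ennreal (c * (1 + 1 / sqrt s + 1 / sqrt (t - s))) * M"
  shows "(\<integral>\<^sup>+ s. F s * indicator {0<..<t} s \<partial>lborel) \<le> ennreal (c * (t + 4 * sqrt t)) * M"
proof -
  define w where "w s = ennreal (indicator {0..t} s * (1 + 1 / sqrt s + 1 / sqrt (t - s)))" for s
  have w_integral: "(\<integral>\<^sup>+ s. w s \<partial>lborel) = ennreal (t + 4 * sqrt t)"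
    unfolding w_def using t
    by (intro nn_integral_has_integral_lebesgue has_integral_time_weight) auto
  have "(\<integral>\<^sup>+ s. F s * indicator {0<..<t} s \<partial>lborel) \<le> (\<integral>\<^sup>+ s. ennreal c * w s * M \<partial>lborel)"
  proof (rule nn_integral_mono)
    fix s
    show "F s * indicator {0<..<t} s \<le> ennreal c * w s * M"
    proof (cases "0 < s \<and> s < t")
      case True
      then show ?thesis using F[of s] by (simp add: w_def ennreal_mult'[OF c])
    qed simp
  qed
  also have "\<dots> = ennreal c * (\<integral>\<^sup>+ s. w s \<partial>lborel) * M"
    unfolding w_def by (simp add: nn_integral_multc nn_integral_cmult)
  also have "\<dots> = ennreal (c * (t + 4 * sqrt t)) * M"
    using c t by (simp add: w_integral ennreal_mult)
  finally show ?thesis .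
qed

lemma kato_int_le:
  assumes V: "V \<in> borel_measurable borel" and t: "0 < t"
  shows "kato_int V t x \<le> ennreal (exp (1/4) * (t + 4 * sqrt t)) * sup_local_mass V"
  unfolding kato_int_def
proof (rule nn_integral_time_le[OF t])
  fix s assume s: "0 < s" "s < t"
  have "1 / sqrt (2 * s) \<le> 1 / sqrt s" using s by (intro divide_left_mono mult_pos_pos) auto
  then have variance: "1 + 1 / sqrt (2 * s) \<le> 1 + 1 / sqrt s + 1 / sqrt (t - s)"
    using s by (smt (verit) divide_nonneg_nonneg real_sqrt_ge_zero)
  have "(\<integral>\<^sup>+ z. ennreal (gauss s x z * \<bar>V z\<bar>) \<partial>lborel)
      \<le> ennreal (exp (1/4) * (1 + 1 / sqrt (2 * s))) * sup_local_mass V"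
    using nn_integral_gauss_weight_le[OF V s(1)] .
  also have "\<dots> \<le> ennreal (exp (1/4) * (1 + 1 / sqrt s + 1 / sqrt (t - s))) * sup_local_mass V"
    using variance by (intro mult_right_mono ennreal_leI mult_left_mono) auto
  finally show "(\<integral>\<^sup>+ z. ennreal (gauss s x z * \<bar>V z\<bar>) \<partial>lborel)
      \<le> ennreal (exp (1/4) * (1 + 1 / sqrt s + 1 / sqrt (t - s))) * sup_local_mass V" .
qed simp

lemma S_fun_le:
  assumes V: "V \<in> borel_measurable borel" and t: "0 < t"
  shows "S_fun V t x y \<le> ennreal (exp (1/4) * (t + 4 * sqrt t)) * sup_local_mass V"
  unfolding S_fun_def
proof (rule nn_integral_time_le[OF t])
  fix s assume s: "0 < s" "s < t"
  have "(\<integral>\<^sup>+ z. ennreal (gauss s x z * gauss (t - s) z y / gauss t x y * \<bar>V z\<bar>) \<partial>lborel)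
      = (\<integral>\<^sup>+ z. ennreal (gauss (s * (t - s) / t) (x + s / t * (y - x)) z * \<bar>V z\<bar>) \<partial>lborel)"
    unfolding gauss_bridge[OF s] ..
  also have "\<dots> \<le> ennreal (exp (1/4) * (1 + 1 / sqrt (2 * (s * (t - s) / t)))) * sup_local_mass V"
    using s by (intro nn_integral_gauss_weight_le[OF V]) auto
  also have "\<dots> \<le> ennreal (exp (1/4) * (1 + 1 / sqrt s + 1 / sqrt (t - s))) * sup_local_mass V"
    using inverse_sqrt_bridge_variance_le[OF s] by (intro mult_right_mono ennreal_leI mult_left_mono) auto
  finally show "(\<integral>\<^sup>+ z. ennreal (gauss s x z * gauss (t - s) z y / gauss t x y * \<bar>V z\<bar>) \<partial>lborel)
      \<le> ennreal (exp (1/4) * (1 + 1 / sqrt s + 1 / sqrt (t - s))) * sup_local_mass V" .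
qed simp

lemma S_norm_le:
  assumes V: "V \<in> borel_measurable borel" and T: "0 < T"
  shows "S_norm V T \<le> ennreal (exp (1/4) * (T + 4 * sqrt T)) * sup_local_mass V"
  unfolding S_norm_def
proof (intro SUP_least)
  fix t x y assume t: "t \<in> {0<..T}"
  have "S_fun V t x y \<le> ennreal (exp (1/4) * (t + 4 * sqrt t)) * sup_local_mass V"
    using t by (intro S_fun_le[OF V]) auto
  also have "\<dots> \<le> ennreal (exp (1/4) * (T + 4 * sqrt T)) * sup_local_mass V"
    using t by (intro mult_right_mono ennreal_leI mult_left_mono add_mono) auto
  finally show "S_fun V t x y \<le> ennreal (exp (1/4) * (T + 4 * sqrt T)) * sup_local_mass V" .
qed

subsection \<open>Lower bounds\<close>

lemma gauss_ge:
  assumes "0 < c" "c \<le> \<sigma>" "\<sigma> \<le> b" "\<bar>z - m\<bar> \<le> 1"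
  shows "exp (- 1 / (4 * c)) / sqrt (4 * pi * b) \<le> gauss \<sigma> m z"
proof -
  have \<sigma>: "0 < \<sigma>" using assms by simp
  have "(z - m)^2 \<le> 1" using assms(4) by (simp add: abs_square_le_1)
  then have "(z - m)^2 / (4 * \<sigma>) \<le> 1 / (4 * \<sigma>)" using \<sigma> by (intro divide_right_mono) auto
  also have "\<dots> \<le> 1 / (4 * c)" using assms by (intro divide_left_mono) auto
  finally have "exp (- 1 / (4 * c)) \<le> exp (- ((z - m)^2) / (4 * \<sigma>))" by simp
  moreover have "sqrt (4 * pi * \<sigma>) \<le> sqrt (4 * pi * b)" using assms by simp
  ultimately show ?thesis using \<sigma> unfolding gauss_eq[OF \<sigma>] by (intro frac_le) auto
qed

lemma nn_integral_gauss_weight_ge: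
  assumes [measurable]: "V \<in> borel_measurable borel" and "0 < c" "c \<le> \<sigma>" "\<sigma> \<le> b"
  shows "ennreal (exp (- 1 / (4 * c)) / sqrt (4 * pi * b)) * local_mass V m
         \<le> (\<integral>\<^sup>+ z. ennreal (gauss \<sigma> m z * \<bar>V z\<bar>) \<partial>lborel)"
proof -
  let ?c = "exp (- 1 / (4 * c)) / sqrt (4 * pi * b)"
  have "ennreal ?c * local_mass V m = (\<integral>\<^sup>+ z. ennreal ?c * (ennreal \<bar>V z\<bar> * indicator {m - 1..m + 1} z) \<partial>lborel)"
    unfolding local_mass_def by (rule nn_integral_cmult[symmetric]) measurable
  also have "\<dots> \<le> (\<integral>\<^sup>+ z. ennreal (gauss \<sigma> m z * \<bar>V z\<bar>) \<partial>lborel)"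
  proof (rule nn_integral_mono)
    fix z
    show "ennreal ?c * (ennreal \<bar>V z\<bar> * indicator {m - 1..m + 1} z) \<le> ennreal (gauss \<sigma> m z * \<bar>V z\<bar>)"
    proof (cases "\<bar>z - m\<bar> \<le> 1")
      case True
      then have "?c * \<bar>V z\<bar> \<le> gauss \<sigma> m z * \<bar>V z\<bar>"
        using gauss_ge assms by (intro mult_right_mono) auto
      moreover have "ennreal ?c * (ennreal \<bar>V z\<bar> * indicator {m - 1..m + 1} z) = ennreal (?c * \<bar>V z\<bar>)"
        using True assms by (subst ennreal_mult') (auto simp: abs_le_iff)
      ultimately show ?thesis by (simp add: ennreal_leI)
    qed (auto simp: indicator_def)
  qed
  finally show ?thesis .
qed

lemma nn_integral_time_ge:
  fixes F :: "real \<Rightarrow> ennreal"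
  assumes "0 \<le> a" "a \<le> b" "b \<le> t" and F: "\<And>s. a < s \<Longrightarrow> s < b \<Longrightarrow> K \<le> F s"
  shows "K * ennreal (b - a) \<le> (\<integral>\<^sup>+ s. F s * indicator {0<..<t} s \<partial>lborel)"
proof -
  have "K * ennreal (b - a) = (\<integral>\<^sup>+ s. K * indicator {a<..<b} s \<partial>lborel)"
    using assms by (simp add: nn_integral_cmult_indicator)
  also have "\<dots> \<le> (\<integral>\<^sup>+ s. F s * indicator {0<..<t} s \<partial>lborel)"
    using assms by (intro nn_integral_mono) (auto simp: indicator_def)
  finally show ?thesis .
qed

lemma kato_int_ge:
  assumes V: "V \<in> borel_measurable borel" and t: "0 < t"
  shows "\<exists>C>0. \<forall>x. ennreal C * local_mass V x \<le> kato_int V t x"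
proof (intro exI conjI allI)
  define c where "c = exp (- 1 / (4 * (t/2))) / sqrt (4 * pi * t)"
  have c: "0 < c" using t by (simp add: c_def)
  show "0 < c * (t/2)" using c t by simp
  fix x
  have "ennreal c * local_mass V x * ennreal (t - t/2) \<le> kato_int V t x"
    unfolding kato_int_def c_def using t
    by (intro nn_integral_time_ge nn_integral_gauss_weight_ge[OF V]) auto
  then show "ennreal (c * (t/2)) * local_mass V x \<le> kato_int V t x"
    using c by (subst ennreal_mult') (auto simp: mult_ac)
qed

lemma bridge_variance_bounds:
  fixes s t :: real
  assumes t: "0 < t" and s: "t/4 < s" "s < 3*t/4"
  shows "t/16 \<le> s * (t - s) / t" "s * (t - s) / t \<le> t/4"
proof -
  have "t/4 * (t/4) \<le> s * (t - s)" using s t by (intro mult_mono) auto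
  then show "t/16 \<le> s * (t - s) / t" using t by (simp add: field_simps)
  have "s * (t - s) \<le> t * t / 4"
    using zero_le_power2[of "s - t/2"] by (simp add: power2_eq_square algebra_simps)
  then show "s * (t - s) / t \<le> t/4" using t by (simp add: field_simps)
qed

lemma S_fun_ge:
  assumes V: "V \<in> borel_measurable borel" and t: "0 < t"
  shows "\<exists>C>0. \<forall>x. ennreal C * local_mass V x \<le> S_fun V t x x"
proof (intro exI conjI allI)
  define c where "c = exp (- 1 / (4 * (t/16))) / sqrt (4 * pi * (t/4))"
  have c: "0 < c" using t by (simp add: c_def)
  show "0 < c * (t/2)" using c t by simp
  fix x
  have "ennreal c * local_mass V x * ennreal (3*t/4 - t/4) \<le> S_fun V t x x"
    unfolding S_fun_def
  proof (rule nn_integral_time_ge)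
    fix s assume s: "t/4 < s" "s < 3*t/4"
    then have st: "0 < s" "s < t" using t by auto
    have "ennreal c * local_mass V x \<le> (\<integral>\<^sup>+ z. ennreal (gauss (s * (t - s) / t) x z * \<bar>V z\<bar>) \<partial>lborel)"
      unfolding c_def using t bridge_variance_bounds[OF t s]
      by (intro nn_integral_gauss_weight_ge[OF V]) auto
    then show "ennreal c * local_mass V x
        \<le> (\<integral>\<^sup>+ z. ennreal (gauss s x z * gauss (t - s) z x / gauss t x x * \<bar>V z\<bar>) \<partial>lborel)"
      unfolding gauss_bridge[OF st] by (simp only: diff_self mult_zero_right add_0_right)
  qed (use t in auto)
  then show "ennreal (c * (t/2)) * local_mass V x \<le> S_fun V t x x"
    using c by (subst ennreal_mult') (auto simp: mult_ac)
qed

lemma tendsto_0_if_eventually_le_mult: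
  fixes f :: "'a \<Rightarrow> ennreal"
  assumes le: "\<forall>\<^sub>F t in F. f t \<le> ennreal (g t) * M" and g: "(g \<longlongrightarrow> 0) F" and M: "M < \<infinity>"
  shows "(f \<longlongrightarrow> 0) F"
proof -
  obtain m where m: "M = ennreal m" "0 \<le> m" using M by (cases M rule: ennreal_cases) auto
  have upper: "\<forall>\<^sub>F t in F. f t \<le> ennreal (g t * m)"
    using le by (rule eventually_mono) (simp add: m ennreal_mult'')
  have "((\<lambda>t. ennreal (g t * m)) \<longlongrightarrow> 0) F"
    using tendsto_ennrealI[OF tendsto_mult_left_zero[OF g, of m]] by simp
  from tendsto_sandwich[OF _ upper tendsto_const this] show ?thesis by simp
qed

lemma ex_finite_if_tendsto_0:
  fixes f :: "real \<Rightarrow> ennreal"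
  assumes "(f \<longlongrightarrow> 0) (at_right 0)"
  shows "\<exists>t>0. f t < \<infinity>"
proof -
  have "\<forall>\<^sub>F t in at_right (0::real). 0 < t \<and> f t < 1"
    by (intro eventually_conj eventually_at_right_less order_tendstoD(2)[OF assms]) simp
  then obtain t where "0 < t" "f t < 1" using eventually_happens[of _ "at_right (0::real)"] by auto
  then show ?thesis using ennreal_one_less_top by (metis infinity_ennreal_def order.strict_trans)
qed

lemma kato_hat_class_if_kato_class: "kato_class V \<Longrightarrow> kato_hat_class V"
  unfolding kato_class_def kato_hat_class_def by (rule ex_finite_if_tendsto_0)

lemma kato_int_SUP_le:
  assumes "V \<in> borel_measurable borel" "0 < t"
  shows "(SUP x. kato_int V t x) \<le> ennreal (exp (1/4) * (t + 4 * sqrt t)) * sup_local_mass V"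
  using kato_int_le[OF assms] by (rule SUP_least)

lemma tendsto_kato_bound: "((\<lambda>t. exp (1/4) * (t + 4 * sqrt t)) \<longlongrightarrow> 0) (at_right 0)"
  by (rule tendsto_eq_intros refl | simp)+

lemma kato_class_if_sup_local_mass_finite:
  assumes V: "V \<in> borel_measurable borel" and M: "sup_local_mass V < \<infinity>"
  shows "kato_class V"
  unfolding kato_class_def
  using eventually_mono[OF eventually_at_right_less kato_int_SUP_le[OF V]] tendsto_kato_bound M
  by (rule tendsto_0_if_eventually_le_mult)

lemma S_norm_tendsto_0_if_sup_local_mass_finite:
  assumes V: "V \<in> borel_measurable borel" and M: "sup_local_mass V < \<infinity>"
  shows "((\<lambda>T. S_norm V T) \<longlongrightarrow> 0) (at_right 0)"
  using eventually_mono[OF eventually_at_right_less S_norm_le[OF V]] tendsto_kato_bound M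
  by (rule tendsto_0_if_eventually_le_mult)

lemma S_norm_finite_if_sup_local_mass_finite:
  assumes V: "V \<in> borel_measurable borel" and M: "sup_local_mass V < \<infinity>" and T: "0 < T"
  shows "S_norm V T < \<infinity>"
  using S_norm_le[OF V T] M
  by (auto simp: ennreal_mult_less_top top_unique intro: le_less_trans)

lemma sup_local_mass_finite_if_kato_hat_class:
  assumes V: "V \<in> borel_measurable borel" and "kato_hat_class V"
  shows "sup_local_mass V < \<infinity>"
proof -
  obtain t where t: "0 < t" "(SUP x. kato_int V t x) < \<infinity>"
    using assms(2) unfolding kato_hat_class_def by auto
  obtain C where C: "0 < C" "\<And>x. ennreal C * local_mass V x \<le> kato_int V t x"
    using kato_int_ge[OF V t(1)] by auto
  have bound: "ennreal C * local_mass V x \<le> (SUP x. kato_int V t x)" for x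
    using C(2) by (rule SUP_upper2[OF UNIV_I])
  show ?thesis by (rule sup_local_mass_finite[OF C(1) bound t(2)])
qed

lemma sup_local_mass_finite_if_S_norm_finite:
  assumes V: "V \<in> borel_measurable borel" and T: "0 < T" "S_norm V T < \<infinity>"
  shows "sup_local_mass V < \<infinity>"
proof -
  obtain C where C: "0 < C" "\<And>x. ennreal C * local_mass V x \<le> S_fun V T x x"
    using S_fun_ge[OF V T(1)] by auto
  have "S_fun V T x x \<le> S_norm V T" for x
    unfolding S_norm_def using T(1)
    by (intro SUP_upper2[where i = T] SUP_upper2[where i = x] SUP_upper) auto
  with C(2) have bound: "ennreal C * local_mass V x \<le> S_norm V T" for x
    by (rule order_trans)
  show ?thesis by (rule sup_local_mass_finite[OF C(1) bound T(2)])
qed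

theorem corollary5p4:
  fixes V :: "real \<Rightarrow> real"
  assumes "V \<in> borel_measurable borel"
  shows "(kato_class V \<longleftrightarrow> kato_hat_class V)
    \<and> (kato_class V \<longleftrightarrow>
         (SUP x. \<integral>\<^sup>+ z. ennreal \<bar>V z\<bar> * indicator {x - 1..x + 1} z \<partial>lborel) < \<infinity>)
    \<and> (kato_class V \<longleftrightarrow> ((\<lambda>T. S_norm V T) \<longlongrightarrow> 0) (at_right 0))
    \<and> (kato_class V \<longleftrightarrow> (\<exists>T>0. S_norm V T < \<infinity>))
    \<and> (kato_class V \<longleftrightarrow> (\<forall>T>0. S_norm V T < \<infinity>))"
proof -
  note V = assms
  have "kato_class V \<longleftrightarrow> sup_local_mass V < \<infinity>"
    using kato_class_if_sup_local_mass_finite[OF V] kato_hat_class_if_kato_class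
      sup_local_mass_finite_if_kato_hat_class[OF V] by blast
  moreover have "kato_hat_class V \<longleftrightarrow> sup_local_mass V < \<infinity>"
    using kato_class_if_sup_local_mass_finite[OF V] kato_hat_class_if_kato_class
      sup_local_mass_finite_if_kato_hat_class[OF V] by blast
  moreover have "((\<lambda>T. S_norm V T) \<longlongrightarrow> 0) (at_right 0) \<longleftrightarrow> sup_local_mass V < \<infinity>"
    using S_norm_tendsto_0_if_sup_local_mass_finite[OF V] ex_finite_if_tendsto_0[of "S_norm V"]
      sup_local_mass_finite_if_S_norm_finite[OF V] by blast
  moreover have "(\<exists>T>0. S_norm V T < \<infinity>) \<longleftrightarrow> sup_local_mass V < \<infinity>"
    using S_norm_finite_if_sup_local_mass_finite[OF V] sup_local_mass_finite_if_S_norm_finite[OF V]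
      zero_less_one by blast
  moreover have "(\<forall>T>0. S_norm V T < \<infinity>) \<longleftrightarrow> sup_local_mass V < \<infinity>"
    using S_norm_finite_if_sup_local_mass_finite[OF V] sup_local_mass_finite_if_S_norm_finite[OF V]
      zero_less_one by blast
  ultimately show ?thesis by (simp add: sup_local_mass_def local_mass_def)
qed

end
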